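(* In the setting below, $\|\mathcal{T}_A\varphi\|_{A_0}\le9\|\varphi\|_{A_0}$ for all $\varphi\in X_N$.
   Context: Standing: $d\ge2$, $m\ge1$, $L\ge3$ odd, $N\ge1$. $\mathbb{T}_N=(\mathbb{Z}/L^N\mathbb{Z})^d$; $X_N$: maps $\mathbb{T}_N\to\mathbb{C}^m$ with zero sum; $\langle\varphi,\psi\rangle=\sum_x\langle\varphi(x),\overline{\psi(x)}\rangle$. $(\nabla_j\varphi)(x)=\varphi(x+e_j)-\varphi(x)$. $A:\mathbb{C}^{m\times d}\to\mathbb{C}^{m\times d}$ linear with $A=A_0+A_1$, $A_0$ Hermitian with $\langle A_0F,F\rangle\ge c_0|F|^2$ ($c_0>0$), $\|A_1\|\le c_0/2$. $(\varphi,\psi)_A=\langle A\nabla\varphi,\nabla\psi\rangle$, $\|\varphi\|_{A_0}=(\varphi,\varphi)_{A_0}^{1/2}$. Let $l\ge3$ be an integer with $l-1<L^N$, $Q=\{1,\dots,l-1\}^d$, $H(Q+x)=\{\varphi\in X_N:\varphi=0\text{ outside }Q+x\}$; $\Pi_{A,x}\varphi$ is the unique $v\in H(Q+x)$ with $(v,\psi)_A=(\varphi,\psi)_A$ for all $\psi\in H(Q+x)$. $\mathcal{T}_A=l^{-d}\sum_{x\in\mathbb{T}_N}\Pi_{A,x}$. *)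

theory Defs
  imports Complex_Main
begin

text \<open>Points of the torus (Z/nZ)^d are represented as functions nat => nat with
  components in {0..<n} for indices below d and 0 otherwise.\<close>

definition torus :: "nat \<Rightarrow> nat \<Rightarrow> (nat \<Rightarrow> nat) set" where
  "torus n d = {x. (\<forall>i<d. x i < n) \<and> (\<forall>i. d \<le> i \<longrightarrow> x i = 0)}"

definition tadd :: "nat \<Rightarrow> nat \<Rightarrow> (nat \<Rightarrow> nat) \<Rightarrow> (nat \<Rightarrow> nat) \<Rightarrow> (nat \<Rightarrow> nat)" where
  "tadd n d x y = (\<lambda>i. if i < d then (x i + y i) mod n else 0)"

definition unitv :: "nat \<Rightarrow> (nat \<Rightarrow> nat)" where
  "unitv j = (\<lambda>i. if i = j then 1 else 0)"

text \<open>Fields T_N -> C^m: value at x, component k (k < m); zero outside.\<close>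
type_synonym cfield = "(nat \<Rightarrow> nat) \<Rightarrow> nat \<Rightarrow> complex"

definition XN :: "nat \<Rightarrow> nat \<Rightarrow> nat \<Rightarrow> cfield set" where
  "XN n d m = {\<phi>. (\<forall>x k. x \<notin> torus n d \<longrightarrow> \<phi> x k = 0)
                 \<and> (\<forall>x k. m \<le> k \<longrightarrow> \<phi> x k = 0)
                 \<and> (\<forall>k<m. (\<Sum>x\<in>torus n d. \<phi> x k) = 0)}"

definition grad :: "nat \<Rightarrow> nat \<Rightarrow> cfield \<Rightarrow> (nat \<Rightarrow> nat) \<Rightarrow> nat \<Rightarrow> nat \<Rightarrow> complex" where
  "grad n d \<phi> x k j = \<phi> (tadd n d x (unitv j)) k - \<phi> x k"

text \<open>Linear maps on C^(m x d), given by their coefficients.\<close>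
type_synonym coeff = "nat \<Rightarrow> nat \<Rightarrow> nat \<Rightarrow> nat \<Rightarrow> complex"

definition applyA :: "nat \<Rightarrow> nat \<Rightarrow> coeff \<Rightarrow> (nat \<Rightarrow> nat \<Rightarrow> complex) \<Rightarrow> (nat \<Rightarrow> nat \<Rightarrow> complex)" where
  "applyA m d A F = (\<lambda>i j. \<Sum>k<m. \<Sum>r<d. A i j k r * F k r)"

definition minner :: "nat \<Rightarrow> nat \<Rightarrow> (nat \<Rightarrow> nat \<Rightarrow> complex) \<Rightarrow> (nat \<Rightarrow> nat \<Rightarrow> complex) \<Rightarrow> complex" where
  "minner m d F G = (\<Sum>i<m. \<Sum>j<d. F i j * cnj (G i j))"

definition mnorm :: "nat \<Rightarrow> nat \<Rightarrow> (nat \<Rightarrow> nat \<Rightarrow> complex) \<Rightarrow> real" where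
  "mnorm m d F = sqrt (\<Sum>i<m. \<Sum>j<d. (cmod (F i j))^2)"

definition formA :: "nat \<Rightarrow> nat \<Rightarrow> nat \<Rightarrow> coeff \<Rightarrow> cfield \<Rightarrow> cfield \<Rightarrow> complex" where
  "formA n d m A \<phi> \<psi> = (\<Sum>x\<in>torus n d. minner m d (applyA m d A (grad n d \<phi> x)) (grad n d \<psi> x))"

definition normA0 :: "nat \<Rightarrow> nat \<Rightarrow> nat \<Rightarrow> coeff \<Rightarrow> cfield \<Rightarrow> real" where
  "normA0 n d m A0 \<phi> = sqrt (Re (formA n d m A0 \<phi> \<phi>))"

definition cube :: "nat \<Rightarrow> nat \<Rightarrow> nat \<Rightarrow> (nat \<Rightarrow> nat) \<Rightarrow> (nat \<Rightarrow> nat) set" where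
  "cube n d l x = {tadd n d x q | q. (\<forall>i<d. 1 \<le> q i \<and> q i \<le> l - 1) \<and> (\<forall>i. d \<le> i \<longrightarrow> q i = 0)}"

definition Hcube :: "nat \<Rightarrow> nat \<Rightarrow> nat \<Rightarrow> nat \<Rightarrow> (nat \<Rightarrow> nat) \<Rightarrow> cfield set" where
  "Hcube n d m l x = {\<phi> \<in> XN n d m. \<forall>y k. y \<notin> cube n d l x \<longrightarrow> \<phi> y k = 0}"

definition proj :: "nat \<Rightarrow> nat \<Rightarrow> nat \<Rightarrow> nat \<Rightarrow> coeff \<Rightarrow> (nat \<Rightarrow> nat) \<Rightarrow> cfield \<Rightarrow> cfield" where
  "proj n d m l A x \<phi> = (THE v. v \<in> Hcube n d m l x \<and>
      (\<forall>\<psi>\<in>Hcube n d m l x. formA n d m A v \<psi> = formA n d m A \<phi> \<psi>))"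

definition TA :: "nat \<Rightarrow> nat \<Rightarrow> nat \<Rightarrow> nat \<Rightarrow> coeff \<Rightarrow> cfield \<Rightarrow> cfield" where
  "TA n d m l A \<phi> = (\<lambda>y k. (\<Sum>x\<in>torus n d. proj n d m l A x \<phi> y k) / (of_nat l ^ d))"

end

theory Submission
  imports Defs "Jordan_Normal_Form.Determinant"
begin

text \<open>
  Write \<open>E(\<phi>) = \<parallel>\<phi>\<parallel>\<^sub>A\<^sub>0\<^sup>2\<close> as a sum over sites of the quadratic form \<open>q\<^sub>0(\<nabla>\<phi>(y))\<close>.
  Since \<open>\<parallel>A\<^sub>1\<parallel> \<le> c\<^sub>0/2\<close>, the form of \<open>A\<close> is coercive with constant \<open>1/2\<close> and bounded
  relative to \<open>q\<^sub>0\<close>, so testing the defining identity of \<open>\<Pi>\<^sub>A\<^sub>,\<^sub>x\<phi>\<close> with \<open>\<Pi>\<^sub>A\<^sub>,\<^sub>x\<phi>\<close> itself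
  and absorbing gives \<open>E(\<Pi>\<^sub>A\<^sub>,\<^sub>x\<phi>) \<le> 9 \<Sum>\<^sub>y\<^sub>\<in>\<^sub>R\<^sub>x q\<^sub>0(\<nabla>\<phi>(y))\<close>, where
  \<open>R\<^sub>x = x + {0..l-1}\<^sup>d\<close> contains every site whose gradient sees the cube \<open>Q + x\<close>.
  At a site \<open>y\<close> at most \<open>l\<^sup>d\<close> of the gradients \<open>\<nabla>\<Pi>\<^sub>A\<^sub>,\<^sub>x\<phi>(y)\<close> are nonzero, so by
  Cauchy--Schwarz \<open>q\<^sub>0(\<nabla>\<T>\<^sub>A\<phi>(y)) \<le> l\<^sup>-\<^sup>d \<Sum>\<^sub>x q\<^sub>0(\<nabla>\<Pi>\<^sub>A\<^sub>,\<^sub>x\<phi>(y))\<close>. Summing over \<open>y\<close>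
  and using that every site lies in exactly \<open>l\<^sup>d\<close> boxes \<open>R\<^sub>x\<close> gives \<open>E(\<T>\<^sub>A\<phi>) \<le> 9 E(\<phi>)\<close>,
  i.e.\ even \<open>\<parallel>\<T>\<^sub>A\<phi>\<parallel>\<^sub>A\<^sub>0 \<le> 3\<parallel>\<phi>\<parallel>\<^sub>A\<^sub>0\<close>. The projection exists by finite-dimensional
  linear algebra: coercivity makes the Gram matrix on a basis of \<open>H(Q + x)\<close> injective.
\<close>

section \<open>Pointwise algebra on \<open>\<complex>\<^sup>m\<^sup>\<times>\<^sup>d\<close>\<close>

lemma minner_add_left: "minner m d (\<lambda>i j. F i j + G i j) H = minner m d F H + minner m d G H"
  by (simp add: minner_def distrib_right sum.distrib)

lemma minner_add_right: "minner m d H (\<lambda>i j. F i j + G i j) = minner m d H F + minner m d H G"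
  by (simp add: minner_def distrib_left sum.distrib)

lemma minner_diff_left: "minner m d (\<lambda>i j. F i j - G i j) H = minner m d F H - minner m d G H"
  by (simp add: minner_def left_diff_distrib sum_subtractf)

lemma minner_diff_right: "minner m d H (\<lambda>i j. F i j - G i j) = minner m d H F - minner m d H G"
  by (simp add: minner_def right_diff_distrib sum_subtractf)

lemma minner_scale_left: "minner m d (\<lambda>i j. c * F i j) H = c * minner m d F H"
  by (simp add: minner_def sum_distrib_left mult.assoc)

lemma minner_scale_right: "minner m d H (\<lambda>i j. c * F i j) = cnj c * minner m d H F"
  by (simp add: minner_def sum_distrib_left mult_ac)

lemma minner_cnj: "cnj (minner m d F G) = minner m d G F"
  by (simp add: minner_def mult.commute)

lemma minner_sum_left:
  "finite S \<Longrightarrow> minner m d (\<lambda>i j. \<Sum>x\<in>S. P x i j) Q = (\<Sum>x\<in>S. minner m d (P x) Q)"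
  by (induction S rule: finite_induct) (simp add: minner_def, simp add: minner_add_left)

lemma minner_sum_right:
  "finite S \<Longrightarrow> minner m d Q (\<lambda>i j. \<Sum>x\<in>S. P x i j) = (\<Sum>x\<in>S. minner m d Q (P x))"
  by (induction S rule: finite_induct) (simp add: minner_def, simp add: minner_add_right)

lemma applyA_add:
  "applyA m d A (\<lambda>i j. F i j + G i j) = (\<lambda>i j. applyA m d A F i j + applyA m d A G i j)"
  by (simp add: applyA_def distrib_left sum.distrib)

lemma applyA_diff:
  "applyA m d A (\<lambda>i j. F i j - G i j) = (\<lambda>i j. applyA m d A F i j - applyA m d A G i j)"
  by (simp add: applyA_def right_diff_distrib sum_subtractf)

lemma applyA_scale: "applyA m d A (\<lambda>i j. c * F i j) = (\<lambda>i j. c * applyA m d A F i j)"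
  by (simp add: applyA_def sum_distrib_left mult_ac)

lemma applyA_sum:
  "finite S \<Longrightarrow> applyA m d A (\<lambda>k j. \<Sum>x\<in>S. G x k j) = (\<lambda>i j. \<Sum>x\<in>S. applyA m d A (G x) i j)"
  by (induction S rule: finite_induct) (simp add: applyA_def, simp add: applyA_add)

lemma applyA_coeff_add:
  "applyA m d (\<lambda>i j k r. A0 i j k r + A1 i j k r) F = (\<lambda>i j. applyA m d A0 F i j + applyA m d A1 F i j)"
  by (simp add: applyA_def distrib_right sum.distrib)

definition mnorm2 :: "nat \<Rightarrow> nat \<Rightarrow> (nat \<Rightarrow> nat \<Rightarrow> complex) \<Rightarrow> real" where
  "mnorm2 m d F = (\<Sum>i<m. \<Sum>j<d. (cmod (F i j))^2)"

lemma mnorm_eq_sqrt_mnorm2: "mnorm m d F = sqrt (mnorm2 m d F)"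
  by (simp add: mnorm_def mnorm2_def)

lemma mnorm2_nonneg: "mnorm2 m d F \<ge> 0"
  by (simp add: mnorm2_def sum_nonneg)

lemma mnorm2_eq_0_iff: "mnorm2 m d F = 0 \<longleftrightarrow> (\<forall>i<m. \<forall>j<d. F i j = 0)"
  unfolding mnorm2_def by (auto simp: sum_nonneg_eq_0_iff sum_nonneg)

lemma cmod_minner_le:
  assumes t: "t > 0"
  shows "cmod (minner m d P G) \<le> (t * mnorm2 m d P + mnorm2 m d G / t) / 2"
proof -
  have "cmod (minner m d P G) \<le> (\<Sum>i<m. \<Sum>j<d. cmod (P i j * cnj (G i j)))"
    unfolding minner_def by (rule order_trans[OF norm_sum sum_mono]) (rule norm_sum)
  also have "\<dots> \<le> (\<Sum>i<m. \<Sum>j<d. (t * (cmod (P i j))^2 + (cmod (G i j))^2 / t) / 2)"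
  proof (intro sum_mono)
    fix i j
    have "0 \<le> (t * cmod (P i j) - cmod (G i j))^2 / t" using t by simp
    hence "2 * (cmod (P i j) * cmod (G i j)) \<le> t * (cmod (P i j))^2 + (cmod (G i j))^2 / t"
      using t by (simp add: power2_eq_square field_simps)
    thus "cmod (P i j * cnj (G i j)) \<le> (t * (cmod (P i j))^2 + (cmod (G i j))^2 / t) / 2"
      by (simp add: norm_mult)
  qed
  also have "\<dots> = (t * mnorm2 m d P + mnorm2 m d G / t) / 2"
    by (simp add: mnorm2_def sum_divide_distrib sum.distrib sum_distrib_left add_divide_distrib)
  finally show ?thesis .
qed

section \<open>Coercive coefficients\<close>

locale coercive_coeff =
  fixes m d :: nat and c0 :: real and A A0 A1 :: coeff
  assumes c0_pos: "c0 > 0"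
    and A_eq: "A = (\<lambda>i j k r. A0 i j k r + A1 i j k r)"
    and A0_hermitian: "\<forall>F G. minner m d (applyA m d A0 F) G = minner m d F (applyA m d A0 G)"
    and A0_coercive: "\<forall>F. Re (minner m d (applyA m d A0 F) F) \<ge> c0 * (mnorm m d F)^2"
    and A1_bounded: "\<forall>F. mnorm m d (applyA m d A1 F) \<le> (c0 / 2) * mnorm m d F"
begin

definition quad0 :: "(nat \<Rightarrow> nat \<Rightarrow> complex) \<Rightarrow> real" where
  "quad0 F = Re (minner m d (applyA m d A0 F) F)"

lemma quad0_ge: "c0 * mnorm2 m d F \<le> quad0 F"
  using A0_coercive[rule_format, of F] by (simp add: quad0_def mnorm_eq_sqrt_mnorm2 mnorm2_nonneg)

lemma quad0_nonneg: "quad0 F \<ge> 0"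
  using quad0_ge[of F] mnorm2_nonneg[of m d F] c0_pos by (smt (verit) mult_nonneg_nonneg)

lemma quad0_scale: "quad0 (\<lambda>k j. c * F k j) = (cmod c)^2 * quad0 F"
proof -
  have "minner m d (applyA m d A0 (\<lambda>k j. c * F k j)) (\<lambda>k j. c * F k j)
      = (c * cnj c) * minner m d (applyA m d A0 F) F"
    by (simp add: applyA_scale minner_scale_left minner_scale_right)
  also have "c * cnj c = complex_of_real ((cmod c)^2)"
    by (rule complex_norm_square[symmetric])
  finally show ?thesis by (simp add: quad0_def)
qed

lemma quad0_cong: "(\<And>i j. j < d \<Longrightarrow> F i j = F' i j) \<Longrightarrow> quad0 F = quad0 F'"
proof -
  assume e: "\<And>i j. j < d \<Longrightarrow> F i j = F' i j"
  have "applyA m d A0 F = applyA m d A0 F'"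
    unfolding applyA_def using e by (intro ext sum.cong) auto
  moreover have "minner m d P F = minner m d P F'" for P
    unfolding minner_def using e by (intro sum.cong) auto
  ultimately show ?thesis by (simp add: quad0_def)
qed

lemma minner_A0_swap: "minner m d (applyA m d A0 G) F = cnj (minner m d (applyA m d A0 F) G)"
  using A0_hermitian[rule_format, of G F] by (simp add: minner_cnj)

text \<open>Expand \<open>q\<^sub>0(\<lambda>F - G) \<ge> 0\<close>, with \<open>|\<lambda>| = t\<close> rotating the cross term onto the real axis.\<close>
lemma cmod_A0_le:
  assumes t: "t > 0"
  shows "cmod (minner m d (applyA m d A0 F) G) \<le> (t * quad0 F + quad0 G / t) / 2"
proof (cases "minner m d (applyA m d A0 F) G = 0")
  case True
  then show ?thesis using quad0_nonneg[of F] quad0_nonneg[of G] t by simp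
next
  case False
  define w where "w = minner m d (applyA m d A0 F) G"
  define lam where "lam = complex_of_real t * cnj w / complex_of_real (cmod w)"
  have w0: "cmod w > 0" using False w_def by simp
  have cw: "cnj w * w = complex_of_real ((cmod w)^2)"
    by (simp add: complex_norm_square mult.commute del: of_real_power)
  have "lam * w = complex_of_real t * (cnj w * w) / complex_of_real (cmod w)"
    unfolding lam_def by (simp add: field_simps)
  also have "\<dots> = complex_of_real (t * cmod w)"
    unfolding cw using w0 by (simp add: field_simps power2_eq_square)
  finally have lw: "lam * w = complex_of_real (t * cmod w)" .
  have "lam * cnj lam = complex_of_real t * complex_of_real t * (cnj w * w)
      / (complex_of_real (cmod w) * complex_of_real (cmod w))"
    unfolding lam_def by (simp add: field_simps)
  also have "\<dots> = complex_of_real (t^2)"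
    unfolding cw using w0 by (simp add: field_simps power2_eq_square)
  finally have ll: "lam * cnj lam = complex_of_real (t^2)" .
  define H where "H = (\<lambda>i j. lam * F i j - G i j)"
  have "minner m d (applyA m d A0 H) H
      = lam * (cnj lam * minner m d (applyA m d A0 F) F - w)
        - (cnj lam * minner m d (applyA m d A0 G) F - minner m d (applyA m d A0 G) G)"
    unfolding H_def applyA_diff applyA_scale
    by (simp add: minner_diff_left minner_diff_right minner_scale_left minner_scale_right w_def
        right_diff_distrib)
  also have "\<dots> = (lam * cnj lam) * minner m d (applyA m d A0 F) F - lam * w - cnj (lam * w)
      + minner m d (applyA m d A0 G) G"
    by (simp add: minner_A0_swap[of G F] w_def algebra_simps)
  finally have "quad0 H = t^2 * quad0 F - 2 * (t * cmod w) + quad0 G"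
    unfolding quad0_def ll lw by simp
  then have "2 * t * cmod w \<le> t^2 * quad0 F + quad0 G"
    using quad0_nonneg[of H] by simp
  then have "cmod w \<le> (t^2 * quad0 F + quad0 G) / (2 * t)"
    using t by (simp add: field_simps)
  also have "\<dots> = (t * quad0 F + quad0 G / t) / 2"
    using t by (simp add: field_simps power2_eq_square)
  finally show ?thesis unfolding w_def .
qed

lemma mnorm2_A1_le: "mnorm2 m d (applyA m d A1 F) \<le> (c0/2)^2 * mnorm2 m d F"
proof -
  have "sqrt (mnorm2 m d (applyA m d A1 F)) \<le> (c0/2) * sqrt (mnorm2 m d F)"
    using A1_bounded[rule_format, of F] by (simp add: mnorm_eq_sqrt_mnorm2)
  also have "\<dots> = sqrt ((c0/2)^2 * mnorm2 m d F)" using c0_pos by (simp add: real_sqrt_mult)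
  finally show ?thesis by simp
qed

lemma cmod_A1_le:
  assumes t: "t > 0"
  shows "cmod (minner m d (applyA m d A1 F) G) \<le> (t * (c0/2)^2 * quad0 F / c0 + quad0 G / (t * c0)) / 2"
proof -
  have "cmod (minner m d (applyA m d A1 F) G)
      \<le> (t * mnorm2 m d (applyA m d A1 F) + mnorm2 m d G / t) / 2"
    by (rule cmod_minner_le[OF t])
  also have "\<dots> \<le> (t * ((c0/2)^2 * mnorm2 m d F) + mnorm2 m d G / t) / 2"
    using mnorm2_A1_le[of F] t by (intro divide_right_mono add_right_mono mult_left_mono) auto
  also have "\<dots> \<le> (t * (c0/2)^2 * quad0 F / c0 + quad0 G / (t * c0)) / 2"
    using quad0_ge[of F] quad0_ge[of G] c0_pos t
    by (intro divide_right_mono add_mono) (simp_all add: field_simps)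
  finally show ?thesis .
qed

lemma minner_applyA_split:
  "minner m d (applyA m d A F) G = minner m d (applyA m d A0 F) G + minner m d (applyA m d A1 F) G"
  unfolding A_eq applyA_coeff_add by (simp add: minner_add_left)

lemma cmod_A_le: "cmod (minner m d (applyA m d A F) G) \<le> 9/4 * quad0 F + quad0 G / 4"
proof -
  have "cmod (minner m d (applyA m d A0 F) G) \<le> (3 * quad0 F + quad0 G / 3) / 2"
    by (rule cmod_A0_le) simp
  moreover have "cmod (minner m d (applyA m d A1 F) G) \<le> 3/4 * quad0 F + quad0 G / 12"
    using cmod_A1_le[of "6/c0" F G] c0_pos by (simp add: field_simps power2_eq_square)
  ultimately show ?thesis
    unfolding minner_applyA_split
    using norm_triangle_ineq[of "minner m d (applyA m d A0 F) G" "minner m d (applyA m d A1 F) G"]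
    by simp
qed

lemma Re_A_ge: "quad0 G / 2 \<le> Re (minner m d (applyA m d A G) G)"
proof -
  have "cmod (minner m d (applyA m d A1 G) G) \<le> quad0 G / 2"
    using cmod_A1_le[of "2/c0" G G] c0_pos by (simp add: field_simps power2_eq_square)
  then show ?thesis
    unfolding minner_applyA_split quad0_def
    using abs_Re_le_cmod[of "minner m d (applyA m d A1 G) G"] by simp
qed

lemma quad0_sum_le:
  assumes S: "finite S"
  shows "quad0 (\<lambda>k j. \<Sum>x\<in>S. G x k j) \<le> real (card S) * (\<Sum>x\<in>S. quad0 (G x))"
proof -
  have "quad0 (\<lambda>k j. \<Sum>x\<in>S. G x k j)
      = (\<Sum>x\<in>S. \<Sum>x'\<in>S. Re (minner m d (applyA m d A0 (G x)) (G x')))"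
    unfolding quad0_def applyA_sum[OF S] minner_sum_left[OF S] minner_sum_right[OF S] by simp
  also have "\<dots> \<le> (\<Sum>x\<in>S. \<Sum>x'\<in>S. quad0 (G x) / 2 + quad0 (G x') / 2)"
  proof (intro sum_mono)
    fix x x'
    show "Re (minner m d (applyA m d A0 (G x)) (G x')) \<le> quad0 (G x) / 2 + quad0 (G x') / 2"
      using complex_Re_le_cmod[of "minner m d (applyA m d A0 (G x)) (G x')"]
        cmod_A0_le[of 1 "G x" "G x'"] by simp
  qed
  also have "\<dots> = real (card S) * (\<Sum>x\<in>S. quad0 (G x))"
    by (simp add: sum.distrib sum.swap[of "\<lambda>x x'. quad0 (G x') / 2"] sum_distrib_left
        sum_divide_distrib[symmetric])
  finally show ?thesis .
qed

end

section \<open>Cubes in the discrete torus\<close>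

definition boxset :: "nat \<Rightarrow> nat \<Rightarrow> (nat \<Rightarrow> nat) set" where
  "boxset d k = {f. (\<forall>i<d. f i < k) \<and> (\<forall>i. d \<le> i \<longrightarrow> f i = 0)}"

lemma torus_eq_boxset: "torus n d = boxset d n"
  by (simp add: torus_def boxset_def)

lemma boxset_Suc: "boxset (Suc d) k = (\<lambda>(f,a). f(d:=a)) ` (boxset d k \<times> {..<k})"
proof (rule Set.set_eqI, rule HOL.iffI)
  fix g assume g: "g \<in> boxset (Suc d) k"
  have "g = (\<lambda>(f,a). f(d:=a)) (g(d:=0), g d)" by simp
  moreover have "(g(d:=0), g d) \<in> boxset d k \<times> {..<k}"
    using g by (auto simp: boxset_def)
  ultimately show "g \<in> (\<lambda>(f,a). f(d:=a)) ` (boxset d k \<times> {..<k})" by blast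
qed (auto simp: boxset_def less_Suc_eq)

lemma inj_on_boxset_extend: "inj_on (\<lambda>(f,a). f(d:=a)) (boxset d k \<times> {..<k})"
proof (rule inj_onI, clarify)
  fix f a g b assume f: "f \<in> boxset d k" and g: "g \<in> boxset d k" and e: "f(d := a) = g(d := b)"
  have "f i = g i" for i
    using fun_cong[OF e, of i] f g by (cases "i = d") (auto simp: boxset_def)
  then show "f = g \<and> a = b" using fun_cong[OF e, of d] by auto
qed

lemma boxset_0: "boxset 0 k = {\<lambda>_. 0}"
  by (auto simp: boxset_def)

lemma finite_boxset: "finite (boxset d k)"
  by (induction d) (simp_all add: boxset_0 boxset_Suc)

lemma card_boxset: "card (boxset d k) = k ^ d"
proof (induction d)
  case 0
  show ?case by (simp add: boxset_0)
next
  case (Suc d)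
  show ?case unfolding boxset_Suc
    using Suc inj_on_boxset_extend[of d k] finite_boxset[of d k]
    by (simp add: card_image card_cartesian_product)
qed

lemma mod_add_eq_if: "(a::nat) < n \<Longrightarrow> b < n \<Longrightarrow> (a + b) mod n = (if a + b < n then a + b else a + b - n)"
  by (simp add: le_mod_geq)

locale torus_cubes =
  fixes n d l :: nat
  assumes d_pos: "d \<ge> 1" and l_ge_2: "l \<ge> 2" and l_less: "l - 1 < n"
begin

abbreviation "T \<equiv> torus n d"

lemma l_le_n: "l \<le> n" using l_less l_ge_2 by simp

lemma finite_torus: "finite T"
  by (simp add: torus_eq_boxset finite_boxset)

lemma tadd_in_torus: "tadd n d x y \<in> T"
  using l_less by (simp add: tadd_def torus_def)

lemma tadd_tadd: "tadd n d (tadd n d x a) b = tadd n d x (\<lambda>i. a i + b i)"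
  by (auto simp: tadd_def mod_add_left_eq add.assoc)

definition tsub :: "(nat \<Rightarrow> nat) \<Rightarrow> (nat \<Rightarrow> nat) \<Rightarrow> (nat \<Rightarrow> nat)" where
  "tsub y q = (\<lambda>i. if i < d then (y i + (n - q i)) mod n else 0)"

lemma tsub_tadd:
  assumes x: "x \<in> T" and q: "\<forall>i<d. q i \<le> n"
  shows "tsub (tadd n d x q) q = x"
proof
  fix i show "tsub (tadd n d x q) q i = x i"
  proof (cases "i < d")
    case True
    have "((x i + q i) mod n + (n - q i)) mod n = (x i + q i + (n - q i)) mod n"
      by (simp add: mod_add_left_eq)
    also have "x i + q i + (n - q i) = x i + n" using q True by simp
    also have "(x i + n) mod n = x i" using x True by (simp add: torus_def)
    finally show ?thesis using True by (simp add: tsub_def tadd_def)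
  next
    case False then show ?thesis using x by (simp add: tsub_def torus_def)
  qed
qed

lemma sum_tadd_shift:
  assumes "\<forall>i<d. q i \<le> n"
  shows "(\<Sum>x\<in>T. f (tadd n d x q)) = (\<Sum>y\<in>T. f y)"
proof -
  have inj: "inj_on (\<lambda>x. tadd n d x q) T"
    by (rule inj_on_inverseI[where g = "\<lambda>y. tsub y q"]) (simp add: tsub_tadd assms)
  then have "(\<lambda>x. tadd n d x q) ` T = T"
    using finite_torus by (intro endo_inj_surj) (auto simp: tadd_in_torus)
  then show ?thesis
    using sum.reindex[OF inj, of f] by simp
qed

definition cube_offsets :: "(nat \<Rightarrow> nat) set" where
  "cube_offsets = {q. (\<forall>i<d. 1 \<le> q i \<and> q i \<le> l - 1) \<and> (\<forall>i. d \<le> i \<longrightarrow> q i = 0)}"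

lemma cube_eq_image: "cube n d l x = (\<lambda>q. tadd n d x q) ` cube_offsets"
  by (auto simp: cube_def cube_offsets_def)

text \<open>The box \<open>x + {0..l-1}\<^sup>d\<close>: the sites whose forward gradient can see the cube \<open>Q + x\<close>.\<close>
definition closed_cube :: "(nat \<Rightarrow> nat) \<Rightarrow> (nat \<Rightarrow> nat) set" where
  "closed_cube x = (\<lambda>q. tadd n d x q) ` boxset d l"

lemma cube_offsets_subset_boxset: "cube_offsets \<subseteq> boxset d l"
  using l_ge_2 by (auto simp: cube_offsets_def boxset_def)

lemma cube_subset_closed_cube: "cube n d l x \<subseteq> closed_cube x"
  unfolding cube_eq_image closed_cube_def using cube_offsets_subset_boxset by blast

lemma cube_subset_torus: "cube n d l x \<subseteq> T"
  unfolding cube_eq_image using tadd_in_torus by blast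

lemma closed_cube_subset_torus: "closed_cube x \<subseteq> T"
  unfolding closed_cube_def using tadd_in_torus by blast

lemma finite_cube: "finite (cube n d l x)"
  using cube_subset_torus finite_torus finite_subset by blast

lemma tadd_unitv_notin_cube:
  assumes y: "y \<in> T" "y \<notin> closed_cube x" and j: "j < d" and x: "x \<in> T"
  shows "tadd n d y (unitv j) \<notin> cube n d l x"
proof
  assume "tadd n d y (unitv j) \<in> cube n d l x"
  then obtain q where q: "q \<in> cube_offsets" and e: "tadd n d y (unitv j) = tadd n d x q"
    unfolding cube_eq_image by blast
  define q' where "q' = q(j := q j - 1)"
  have "y i = tadd n d x q' i" for i
  proof (cases "i < d")
    case False then show ?thesis using y by (simp add: torus_def tadd_def)
  next
    case True
    have ei: "(y i + unitv j i) mod n = (x i + q i) mod n"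
      using fun_cong[OF e, of i] True by (simp add: tadd_def)
    have "y i < n" "x i < n" "1 \<le> q i" "q i < n"
      using y x q l_less True by (auto simp: torus_def cube_offsets_def)
    then show ?thesis
      using ei True l_less l_ge_2 mod_add_eq_if[of "y i" n 1] mod_add_eq_if[of "x i" n "q i"]
        mod_add_eq_if[of "x i" n "q i - 1"]
      by (cases "i = j") (auto simp: unitv_def tadd_def q'_def split: if_splits)
  qed
  moreover have "q' \<in> boxset d l"
    using q l_ge_2 by (auto simp: q'_def cube_offsets_def boxset_def)
  ultimately have "y \<in> closed_cube x" unfolding closed_cube_def by blast
  with y show False by simp
qed

text \<open>A function supported in a cube and invariant under the shift by \<open>e\<^sub>0\<close> vanishes:
  walk from the point in question in direction \<open>-e\<^sub>0\<close> until the cube is left.\<close>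
lemma cube_supported_shift_invariant_eq_0:
  fixes w :: "(nat \<Rightarrow> nat) \<Rightarrow> complex"
  assumes x: "x \<in> T" and supp: "\<forall>y. y \<notin> cube n d l x \<longrightarrow> w y = 0"
    and shift: "\<forall>y\<in>T. w (tadd n d y (unitv 0)) = w y"
  shows "w z = 0"
proof (cases "z \<in> cube n d l x")
  case False then show ?thesis using supp by simp
next
  case True
  then obtain q where q: "q \<in> cube_offsets" and z: "z = tadd n d x q" unfolding cube_eq_image by blast
  have d0: "0 < d" using d_pos by simp
  have "s \<le> q 0 \<longrightarrow> w (tadd n d x (q(0:=s))) = 0" for s
  proof (induction s)
    case 0
    have "tadd n d x (q(0:=0)) \<notin> cube n d l x"
    proof
      assume "tadd n d x (q(0:=0)) \<in> cube n d l x"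
      then obtain q' where q': "q' \<in> cube_offsets" and e: "tadd n d x (q(0:=0)) = tadd n d x q'"
        unfolding cube_eq_image by blast
      have "x 0 mod n = (x 0 + q' 0) mod n" using fun_cong[OF e, of 0] d0 by (simp add: tadd_def)
      moreover have "x 0 < n" "1 \<le> q' 0" "q' 0 < n"
        using x q' d0 l_less by (auto simp: torus_def cube_offsets_def)
      ultimately show False using mod_add_eq_if[of "x 0" n "q' 0"] by (simp split: if_splits)
    qed
    then show ?case using supp by blast
  next
    case (Suc s)
    have "tadd n d (tadd n d x (q(0:=s))) (unitv 0) = tadd n d x (q(0:=Suc s))"
      unfolding tadd_tadd by (rule arg_cong[where f="tadd n d x"]) (auto simp: unitv_def)
    then show ?case
      using Suc shift tadd_in_torus by (metis Suc_leD)
  qed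
  then show ?thesis using z by (metis fun_upd_triv order_refl)
qed

lemma card_closed_cubes_containing: "card {x \<in> T. y \<in> closed_cube x} \<le> l ^ d"
proof -
  have "{x \<in> T. y \<in> closed_cube x} \<subseteq> (\<lambda>q. tsub y q) ` boxset d l"
  proof
    fix x assume "x \<in> {x \<in> T. y \<in> closed_cube x}"
    then obtain q where x: "x \<in> T" and q: "q \<in> boxset d l" and yq: "y = tadd n d x q"
      unfolding closed_cube_def by blast
    have "\<forall>i<d. q i \<le> n" using q l_le_n by (auto simp: boxset_def)
    then have "x = tsub y q" using tsub_tadd x yq by simp
    then show "x \<in> (\<lambda>q. tsub y q) ` boxset d l" using q by blast
  qed
  then have "card {x \<in> T. y \<in> closed_cube x} \<le> card ((\<lambda>q. tsub y q) ` boxset d l)"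
    using finite_boxset by (intro card_mono) auto
  also have "\<dots> \<le> l ^ d" using card_image_le[OF finite_boxset] card_boxset by metis
  finally show ?thesis .
qed

lemma sum_sum_closed_cube_le:
  assumes nonneg: "\<forall>y. f y \<ge> (0::real)"
  shows "(\<Sum>x\<in>T. \<Sum>y\<in>closed_cube x. f y) \<le> real (l ^ d) * (\<Sum>y\<in>T. f y)"
proof -
  have "(\<Sum>x\<in>T. \<Sum>y\<in>closed_cube x. f y) \<le> (\<Sum>x\<in>T. \<Sum>q\<in>boxset d l. f (tadd n d x q))"
    unfolding closed_cube_def
    using sum_image_le[OF finite_boxset, where g = f] nonneg by (intro sum_mono) (simp add: o_def)
  also have "\<dots> = (\<Sum>q\<in>boxset d l. \<Sum>x\<in>T. f (tadd n d x q))" by (rule sum.swap)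
  also have "\<dots> = (\<Sum>q\<in>boxset d l. \<Sum>y\<in>T. f y)"
    using l_le_n by (intro sum.cong refl sum_tadd_shift) (auto simp: boxset_def)
  also have "\<dots> = real (l ^ d) * (\<Sum>y\<in>T. f y)" by (simp add: card_boxset)
  finally show ?thesis .
qed

end

section \<open>Square linear systems\<close>

lemma square_mat_surj_if_inj:
  fixes M :: "'a :: field mat"
  assumes M: "M \<in> carrier_mat D D" and inj: "\<forall>c \<in> carrier_vec D. M *\<^sub>v c = 0\<^sub>v D \<longrightarrow> c = 0\<^sub>v D"
    and g: "g \<in> carrier_vec D"
  shows "\<exists>c \<in> carrier_vec D. M *\<^sub>v c = g"
proof -
  have "det M \<noteq> 0" using det_0_iff_vec_prod_zero_field[OF M] inj by auto
  then have "M \<in> Units (ring_mat TYPE('a) D ())" by (rule det_non_zero_imp_unit[OF M])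
  then obtain B where B: "B \<in> carrier_mat D D" and MB: "M * B = 1\<^sub>m D"
    unfolding Units_def by (auto simp: ring_mat_simps)
  have "M *\<^sub>v (B *\<^sub>v g) = g"
    using assoc_mult_mat_vec[OF M B g] MB one_mult_mat_vec[OF g] by simp
  moreover have "B *\<^sub>v g \<in> carrier_vec D" using B g by simp
  ultimately show ?thesis by blast
qed

lemma finite_linear_system_solvable:
  fixes G :: "'p \<Rightarrow> 'p \<Rightarrow> 'a :: field"
  assumes P: "finite P"
    and inj: "\<And>c. \<forall>p\<in>P. (\<Sum>q\<in>P. c q * G q p) = 0 \<Longrightarrow> \<forall>p\<in>P. c p = 0"
  shows "\<exists>c. \<forall>p\<in>P. (\<Sum>q\<in>P. c q * G q p) = g p"
proof -
  define D where "D = card P"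
  obtain E where E: "bij_betw E {0..<D} P"
    using ex_bij_betw_nat_finite[OF P] D_def by blast
  define coef where "coef c = (\<lambda>q. c $ the_inv_into {0..<D} E q)" for c :: "'a vec"
  define M where "M = mat D D (\<lambda>(i,j). G (E j) (E i))"
  have coef_E: "coef c (E j) = c $ j" if "j < D" for c j
    using E that by (simp add: coef_def bij_betw_def the_inv_into_f_f)
  have M_mult: "(M *\<^sub>v c) $ i = (\<Sum>q\<in>P. coef c q * G q (E i))"
    if "c \<in> carrier_vec D" "i < D" for c i
  proof -
    have "(M *\<^sub>v c) $ i = (\<Sum>j\<in>{0..<D}. coef c (E j) * G (E j) (E i))"
      using that coef_E by (simp add: M_def scalar_prod_def mult.commute)
    also have "\<dots> = (\<Sum>q\<in>P. coef c q * G q (E i))"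
      by (rule sum.reindex_bij_betw[OF E])
    finally show ?thesis .
  qed
  have P_eq: "P = E ` {0..<D}" using E by (simp add: bij_betw_def)
  have "\<forall>c \<in> carrier_vec D. M *\<^sub>v c = 0\<^sub>v D \<longrightarrow> c = 0\<^sub>v D"
  proof (intro ballI impI)
    fix c :: "'a vec" assume c: "c \<in> carrier_vec D" and Mc: "M *\<^sub>v c = 0\<^sub>v D"
    have "\<forall>p\<in>P. (\<Sum>q\<in>P. coef c q * G q p) = 0"
    proof
      fix p assume "p \<in> P"
      then obtain i where "i < D" "p = E i" using P_eq by auto
      then show "(\<Sum>q\<in>P. coef c q * G q p) = 0" using M_mult[OF c] Mc by simp
    qed
    then have "\<forall>p\<in>P. coef c p = 0" by (rule inj)
    then have "c $ i = 0" if "i < D" for i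
      using coef_E[of i c] that P_eq by auto
    then show "c = 0\<^sub>v D" using c by (intro eq_vecI) auto
  qed
  moreover have "M \<in> carrier_mat D D" by (simp add: M_def)
  moreover have "vec D (\<lambda>i. g (E i)) \<in> carrier_vec D" by simp
  ultimately obtain c where c: "c \<in> carrier_vec D" and "M *\<^sub>v c = vec D (\<lambda>i. g (E i))"
    using square_mat_surj_if_inj by blast
  have "(\<Sum>q\<in>P. coef c q * G q p) = g p" if "p \<in> P" for p
  proof -
    obtain i where "i < D" "p = E i" using \<open>p \<in> P\<close> P_eq by auto
    then show ?thesis using M_mult[OF c] \<open>M *\<^sub>v c = vec D (\<lambda>i. g (E i))\<close> by simp
  qed
  then show ?thesis by blast
qed

section \<open>The sesquilinear forms on fields\<close>

lemma grad_add: "grad n d (\<lambda>y k. f y k + g y k) x = (\<lambda>k j. grad n d f x k j + grad n d g x k j)"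
  by (simp add: grad_def fun_eq_iff)

lemma grad_diff: "grad n d (\<lambda>y k. f y k - g y k) x = (\<lambda>k j. grad n d f x k j - grad n d g x k j)"
  by (simp add: grad_def fun_eq_iff)

lemma grad_scale: "grad n d (\<lambda>y k. c * f y k) x = (\<lambda>k j. c * grad n d f x k j)"
  by (simp add: grad_def fun_eq_iff right_diff_distrib)

lemma formA_add_left: "formA n d m A (\<lambda>y k. f y k + g y k) \<psi> = formA n d m A f \<psi> + formA n d m A g \<psi>"
  by (simp add: formA_def grad_add applyA_add minner_add_left sum.distrib)

lemma formA_diff_left: "formA n d m A (\<lambda>y k. f y k - g y k) \<psi> = formA n d m A f \<psi> - formA n d m A g \<psi>"
  by (simp add: formA_def grad_diff applyA_diff minner_diff_left sum_subtractf)

lemma formA_scale_left: "formA n d m A (\<lambda>y k. c * f y k) \<psi> = c * formA n d m A f \<psi>"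
  by (simp add: formA_def grad_scale applyA_scale minner_scale_left sum_distrib_left)

lemma formA_zero_left: "formA n d m A (\<lambda>y k. 0) \<psi> = 0"
  by (simp add: formA_def grad_def applyA_def minner_def)

lemma formA_add_right: "formA n d m A \<psi> (\<lambda>y k. f y k + g y k) = formA n d m A \<psi> f + formA n d m A \<psi> g"
  by (simp add: formA_def grad_add minner_add_right sum.distrib)

lemma formA_scale_right: "formA n d m A \<psi> (\<lambda>y k. c * f y k) = cnj c * formA n d m A \<psi> f"
  by (simp add: formA_def grad_scale minner_scale_right sum_distrib_left)

lemma formA_zero_right: "formA n d m A \<psi> (\<lambda>y k. 0) = 0"
  by (simp add: formA_def grad_def minner_def)

lemma formA_sum_left:
  "finite J \<Longrightarrow> formA n d m A (\<lambda>y k. \<Sum>j\<in>J. c j * u j y k) \<psi> = (\<Sum>j\<in>J. c j * formA n d m A (u j) \<psi>)"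
  by (induction J rule: finite_induct) (simp_all add: formA_zero_left formA_add_left formA_scale_left)

lemma formA_sum_right:
  "finite J \<Longrightarrow>
    formA n d m A \<psi> (\<lambda>y k. \<Sum>j\<in>J. c j * u j y k) = (\<Sum>j\<in>J. cnj (c j) * formA n d m A \<psi> (u j))"
  by (induction J rule: finite_induct) (simp_all add: formA_zero_right formA_add_right formA_scale_right)

section \<open>The local projections\<close>

locale cube_projection = coercive_coeff m d c0 A A0 A1 + torus_cubes n d l for m d c0 A A0 A1 n l
begin

abbreviation "H x \<equiv> Hcube n d m l x"

lemma Re_formA: "Re (formA n d m B f g) = (\<Sum>y\<in>T. Re (minner m d (applyA m d B (grad n d f y)) (grad n d g y)))"
  by (simp add: formA_def)

lemma Hcube_lincomb:
  assumes "finite J" "\<forall>j\<in>J. u j \<in> H x"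
  shows "(\<lambda>y k. \<Sum>j\<in>J. c j * u j y k) \<in> H x"
proof -
  have "(\<Sum>y\<in>T. \<Sum>j\<in>J. c j * u j y k) = (\<Sum>j\<in>J. c j * (\<Sum>y\<in>T. u j y k))" for k
    by (simp add: sum.swap[of _ T] sum_distrib_left)
  then show ?thesis using assms by (simp add: Hcube_def XN_def)
qed

lemma Hcube_diff: "f \<in> H x \<Longrightarrow> g \<in> H x \<Longrightarrow> (\<lambda>y k. f y k - g y k) \<in> H x"
  by (auto simp: Hcube_def XN_def sum_subtractf)

text \<open>Coercivity: \<open>Re (w, w)\<^sub>A = 0\<close> forces \<open>\<nabla>\<^sub>0 w = 0\<close>, and a field supported in the cube
  with vanishing gradient in direction \<open>e\<^sub>0\<close> vanishes.\<close>
lemma Hcube_formA_self_eq_0: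
  assumes x: "x \<in> T" and w: "w \<in> H x" and z: "formA n d m A w w = 0"
  shows "w = (\<lambda>y k. 0)"
proof -
  have "(\<Sum>y\<in>T. c0 * mnorm2 m d (grad n d w y) / 2) \<le> (\<Sum>y\<in>T. quad0 (grad n d w y) / 2)"
    using quad0_ge by (intro sum_mono) simp
  also have "\<dots> \<le> Re (formA n d m A w w)"
    unfolding Re_formA by (intro sum_mono Re_A_ge)
  finally have "(\<Sum>y\<in>T. c0 * mnorm2 m d (grad n d w y) / 2) \<le> 0" using z by simp
  moreover have nonneg: "\<forall>y\<in>T. 0 \<le> c0 * mnorm2 m d (grad n d w y) / 2"
    using c0_pos mnorm2_nonneg by simp
  moreover have "0 \<le> (\<Sum>y\<in>T. c0 * mnorm2 m d (grad n d w y) / 2)"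
    using nonneg by (intro sum_nonneg) auto
  ultimately have "(\<Sum>y\<in>T. c0 * mnorm2 m d (grad n d w y) / 2) = 0" by linarith
  then have "\<forall>y\<in>T. c0 * mnorm2 m d (grad n d w y) / 2 = 0"
    using nonneg finite_torus by (simp add: sum_nonneg_eq_0_iff)
  then have grad0: "\<forall>y\<in>T. \<forall>k<m. grad n d w y k 0 = 0"
    using c0_pos d_pos by (auto simp: mnorm2_eq_0_iff)
  have "w z k = 0" for z k
  proof (cases "k < m")
    case False then show ?thesis using w by (simp add: Hcube_def XN_def)
  next
    case True
    show ?thesis
      using cube_supported_shift_invariant_eq_0[OF x, of "\<lambda>y. w y k" z] w grad0 True
      by (simp add: Hcube_def grad_def)
  qed
  then show ?thesis by blast
qed

text \<open>A basis of \<open>H(Q + x)\<close>: the zero-sum constraint is absorbed at the corner \<open>cube_anchor x\<close>,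
  so the remaining values at the other sites of the cube are free coordinates.\<close>
definition cube_anchor :: "(nat \<Rightarrow> nat) \<Rightarrow> (nat \<Rightarrow> nat)" where
  "cube_anchor x = tadd n d x (\<lambda>i. if i < d then 1 else 0)"

definition cube_dofs :: "(nat \<Rightarrow> nat) \<Rightarrow> ((nat \<Rightarrow> nat) \<times> nat) set" where
  "cube_dofs x = (cube n d l x - {cube_anchor x}) \<times> {..<m}"

definition cube_basis :: "(nat \<Rightarrow> nat) \<Rightarrow> (nat \<Rightarrow> nat) \<times> nat \<Rightarrow> cfield" where
  "cube_basis x pk = (\<lambda>y k. (if y = fst pk \<and> k = snd pk then 1 else 0)
                          - (if y = cube_anchor x \<and> k = snd pk then 1 else 0))"

lemma cube_anchor_in_cube: "cube_anchor x \<in> cube n d l x"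
  unfolding cube_eq_image cube_anchor_def cube_offsets_def using l_ge_2 by auto

lemma finite_cube_dofs: "finite (cube_dofs x)"
  unfolding cube_dofs_def using finite_cube by simp

lemma cube_basis_in_Hcube:
  assumes pk: "pk \<in> cube_dofs x"
  shows "cube_basis x pk \<in> H x"
proof -
  have p: "fst pk \<in> cube n d l x" "fst pk \<noteq> cube_anchor x" and k: "snd pk < m"
    using pk by (auto simp: cube_dofs_def)
  have "fst pk \<in> T" "cube_anchor x \<in> T"
    using p cube_subset_torus cube_anchor_in_cube by auto
  then have "(\<Sum>y\<in>T. (if y = p \<and> Q then 1 else 0) :: complex) = (if Q then 1 else 0)"
    if "p \<in> {fst pk, cube_anchor x}" for p Q
    using that finite_torus by (cases Q) auto
  then show ?thesis
    unfolding Hcube_def XN_def cube_basis_def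
    using p cube_anchor_in_cube[of x] cube_subset_torus k by (auto simp: sum_subtractf)
qed

lemma cube_basis_eval:
  assumes "pk \<in> cube_dofs x" "pk' \<in> cube_dofs x"
  shows "cube_basis x pk (fst pk') (snd pk') = (if pk = pk' then 1 else 0)"
  using assms by (auto simp: cube_basis_def cube_dofs_def prod_eq_iff)

lemma cube_basis_lincomb_eval:
  assumes "p \<in> cube_dofs x"
  shows "(\<Sum>q\<in>cube_dofs x. c q * cube_basis x q (fst p) (snd p)) = c p"
proof -
  have "(\<Sum>q\<in>cube_dofs x. c q * cube_basis x q (fst p) (snd p)) = (\<Sum>q\<in>cube_dofs x. if q = p then c q else 0)"
    using assms by (intro sum.cong) (auto simp: cube_basis_eval)
  then show ?thesis using assms finite_cube_dofs by simp
qed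

lemma Hcube_anchor_value:
  assumes "\<psi> \<in> H x"
  shows "\<psi> (cube_anchor x) k = - (\<Sum>p\<in>cube n d l x - {cube_anchor x}. \<psi> p k)"
proof (cases "k < m")
  case True
  have "(\<Sum>y\<in>cube n d l x. \<psi> y k) = (\<Sum>y\<in>T. \<psi> y k)"
    using assms cube_subset_torus finite_torus
    by (intro sum.mono_neutral_left) (auto simp: Hcube_def)
  also have "\<dots> = 0" using assms True by (simp add: Hcube_def XN_def)
  finally show ?thesis
    using cube_anchor_in_cube[of x] finite_cube[of x] by (simp add: sum.remove eq_neg_iff_add_eq_0)
next
  case False
  then show ?thesis using assms by (simp add: Hcube_def XN_def)
qed

lemma Hcube_expansion:
  assumes \<psi>: "\<psi> \<in> H x"
  shows "\<psi> = (\<lambda>y k. \<Sum>pk\<in>cube_dofs x. \<psi> (fst pk) (snd pk) * cube_basis x pk y k)"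
proof (intro ext)
  fix y k
  let ?C = "cube n d l x - {cube_anchor x}"
  have "(\<Sum>pk\<in>cube_dofs x. \<psi> (fst pk) (snd pk) * cube_basis x pk y k)
      = (\<Sum>pk\<in>cube_dofs x. if pk = (y,k) then \<psi> y k else 0)
        - (\<Sum>p\<in>?C. \<Sum>k'<m. if y = cube_anchor x \<and> k' = k then \<psi> p k else 0)"
    unfolding sum_subtractf[symmetric] cube_dofs_def sum.cartesian_product
    by (rule sum.cong) (auto simp: cube_basis_def)
  also have "\<dots> = (if (y,k) \<in> cube_dofs x then \<psi> y k else 0)
      - (if y = cube_anchor x \<and> k < m then \<Sum>p\<in>?C. \<psi> p k else 0)"
    using finite_cube_dofs by (cases "y = cube_anchor x") (auto simp: sum.delta')
  also have "\<dots> = \<psi> y k"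
    using \<psi> Hcube_anchor_value[OF \<psi>, of k]
    by (auto simp: cube_dofs_def Hcube_def XN_def)
  finally show "\<psi> y k = (\<Sum>pk\<in>cube_dofs x. \<psi> (fst pk) (snd pk) * cube_basis x pk y k)" ..
qed

lemma formA_eq_on_Hcube:
  assumes "\<forall>pk\<in>cube_dofs x. formA n d m A v (cube_basis x pk) = formA n d m A w (cube_basis x pk)"
    and "\<psi> \<in> H x"
  shows "formA n d m A v \<psi> = formA n d m A w \<psi>"
  using assms finite_cube_dofs
  by (subst (1 2) Hcube_expansion[OF assms(2)]) (simp add: formA_sum_right)

lemma proj_exists:
  assumes x: "x \<in> T"
  shows "\<exists>v\<in>H x. \<forall>\<psi>\<in>H x. formA n d m A v \<psi> = formA n d m A \<phi> \<psi>"
proof -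
  define V where "V c = (\<lambda>y k. \<Sum>q\<in>cube_dofs x. c q * cube_basis x q y k)" for c
  have V_Hcube: "V c \<in> H x" for c
    unfolding V_def using finite_cube_dofs cube_basis_in_Hcube by (intro Hcube_lincomb) auto
  have formA_V: "formA n d m A (V c) \<psi> = (\<Sum>q\<in>cube_dofs x. c q * formA n d m A (cube_basis x q) \<psi>)"
    for c \<psi> unfolding V_def using finite_cube_dofs by (rule formA_sum_left)
  have "\<exists>c. \<forall>p\<in>cube_dofs x. (\<Sum>q\<in>cube_dofs x. c q * formA n d m A (cube_basis x q) (cube_basis x p))
      = formA n d m A \<phi> (cube_basis x p)"
  proof (rule finite_linear_system_solvable[OF finite_cube_dofs])
    fix c assume "\<forall>p\<in>cube_dofs x.
      (\<Sum>q\<in>cube_dofs x. c q * formA n d m A (cube_basis x q) (cube_basis x p)) = 0"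
    then have "\<forall>p\<in>cube_dofs x.
        formA n d m A (V c) (cube_basis x p) = formA n d m A (\<lambda>y k. 0) (cube_basis x p)"
      by (simp add: formA_V formA_zero_left)
    then have "formA n d m A (V c) (V c) = formA n d m A (\<lambda>y k. 0) (V c)"
      by (rule formA_eq_on_Hcube[OF _ V_Hcube])
    then have V0: "V c = (\<lambda>y k. 0)"
      by (intro Hcube_formA_self_eq_0[OF x V_Hcube]) (simp add: formA_zero_left)
    show "\<forall>p\<in>cube_dofs x. c p = 0"
    proof
      fix p assume "p \<in> cube_dofs x"
      then have "c p = V c (fst p) (snd p)" unfolding V_def by (simp add: cube_basis_lincomb_eval)
      then show "c p = 0" using V0 by simp
    qed
  qed
  then obtain c where c: "\<forall>p\<in>cube_dofs x.
      (\<Sum>q\<in>cube_dofs x. c q * formA n d m A (cube_basis x q) (cube_basis x p))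
      = formA n d m A \<phi> (cube_basis x p)"
    by blast
  have "\<forall>\<psi>\<in>H x. formA n d m A (V c) \<psi> = formA n d m A \<phi> \<psi>"
  proof
    fix \<psi> assume "\<psi> \<in> H x"
    moreover have "\<forall>p\<in>cube_dofs x. formA n d m A (V c) (cube_basis x p) = formA n d m A \<phi> (cube_basis x p)"
      using c by (simp add: formA_V)
    ultimately show "formA n d m A (V c) \<psi> = formA n d m A \<phi> \<psi>"
      using formA_eq_on_Hcube by blast
  qed
  then show ?thesis using V_Hcube by blast
qed

lemma proj_characterization:
  assumes x: "x \<in> T"
  shows "proj n d m l A x \<phi> \<in> H x"
    and "\<forall>\<psi>\<in>H x. formA n d m A (proj n d m l A x \<phi>) \<psi> = formA n d m A \<phi> \<psi>"
proof -
  have "\<exists>!v. v \<in> H x \<and> (\<forall>\<psi>\<in>H x. formA n d m A v \<psi> = formA n d m A \<phi> \<psi>)"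
  proof (rule ex_ex1I)
    fix v w assume v: "v \<in> H x \<and> (\<forall>\<psi>\<in>H x. formA n d m A v \<psi> = formA n d m A \<phi> \<psi>)"
      and w: "w \<in> H x \<and> (\<forall>\<psi>\<in>H x. formA n d m A w \<psi> = formA n d m A \<phi> \<psi>)"
    have vw: "(\<lambda>y k. v y k - w y k) \<in> H x" using v w by (intro Hcube_diff) auto
    then have "formA n d m A (\<lambda>y k. v y k - w y k) (\<lambda>y k. v y k - w y k) = 0"
      using v w by (simp add: formA_diff_left)
    then have "(\<lambda>y k. v y k - w y k) = (\<lambda>y k. 0)" by (rule Hcube_formA_self_eq_0[OF x vw])
    then show "v = w" by (metis (no_types) eq_iff_diff_eq_0 ext)
  qed (use proj_exists[OF x] in blast)
  then have "proj n d m l A x \<phi> \<in> H x \<and>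
      (\<forall>\<psi>\<in>H x. formA n d m A (proj n d m l A x \<phi>) \<psi> = formA n d m A \<phi> \<psi>)"
    unfolding proj_def by (rule theI')
  then show "proj n d m l A x \<phi> \<in> H x"
    and "\<forall>\<psi>\<in>H x. formA n d m A (proj n d m l A x \<phi>) \<psi> = formA n d m A \<phi> \<psi>"
    by auto
qed

section \<open>Energy estimates\<close>

definition energy :: "cfield \<Rightarrow> real" where
  "energy f = (\<Sum>y\<in>T. quad0 (grad n d f y))"

lemma normA0_eq_sqrt_energy: "normA0 n d m A0 f = sqrt (energy f)"
  by (simp add: normA0_def Re_formA energy_def quad0_def)

lemma energy_nonneg: "energy f \<ge> 0"
  unfolding energy_def by (intro sum_nonneg quad0_nonneg)

lemma grad_proj_outside_closed_cube:
  assumes x: "x \<in> T" and y: "y \<in> T" "y \<notin> closed_cube x" and j: "j < d"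
  shows "grad n d (proj n d m l A x \<phi>) y k j = 0"
proof -
  have "y \<notin> cube n d l x" using y cube_subset_closed_cube by blast
  moreover have "tadd n d y (unitv j) \<notin> cube n d l x" using tadd_unitv_notin_cube[OF y j x] .
  ultimately show ?thesis using proj_characterization(1)[OF x] by (simp add: grad_def Hcube_def)
qed

lemma energy_proj_le:
  assumes x: "x \<in> T"
  shows "energy (proj n d m l A x \<phi>) \<le> 9 * (\<Sum>y\<in>closed_cube x. quad0 (grad n d \<phi> y))"
proof -
  define v where "v = proj n d m l A x \<phi>"
  have R: "closed_cube x \<subseteq> T" by (rule closed_cube_subset_torus)
  have "energy v / 2 = (\<Sum>y\<in>T. quad0 (grad n d v y) / 2)"
    by (simp add: energy_def sum_divide_distrib)
  also have "\<dots> \<le> Re (formA n d m A v v)"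
    unfolding Re_formA by (intro sum_mono Re_A_ge)
  also have "\<dots> = Re (formA n d m A \<phi> v)"
    using proj_characterization[OF x] unfolding v_def by simp
  also have "\<dots> \<le> cmod (formA n d m A \<phi> v)" by (rule complex_Re_le_cmod)
  also have "formA n d m A \<phi> v = (\<Sum>y\<in>closed_cube x. minner m d (applyA m d A (grad n d \<phi> y)) (grad n d v y))"
    unfolding formA_def
    by (rule sum.mono_neutral_right)
      (use R finite_torus grad_proj_outside_closed_cube[OF x] in \<open>auto simp: v_def minner_def\<close>)
  also have "cmod \<dots> \<le> (\<Sum>y\<in>closed_cube x. 9/4 * quad0 (grad n d \<phi> y) + quad0 (grad n d v y) / 4)"
    by (intro order_trans[OF norm_sum] sum_mono cmod_A_le)
  also have "\<dots> = 9/4 * (\<Sum>y\<in>closed_cube x. quad0 (grad n d \<phi> y)) + (\<Sum>y\<in>closed_cube x. quad0 (grad n d v y)) / 4"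
    by (simp add: sum.distrib sum_distrib_left sum_divide_distrib)
  also have "(\<Sum>y\<in>closed_cube x. quad0 (grad n d v y)) \<le> energy v"
    unfolding energy_def using R finite_torus quad0_nonneg by (intro sum_mono2) auto
  finally show ?thesis unfolding v_def by simp
qed

lemma grad_TA:
  "grad n d (TA n d m l A \<phi>) y = (\<lambda>k j. inverse (of_nat l ^ d) * (\<Sum>x\<in>T. grad n d (proj n d m l A x \<phi>) y k j))"
  unfolding TA_def grad_def sum_subtractf
  by (simp add: fun_eq_iff divide_inverse_commute diff_divide_distrib right_diff_distrib)

lemma quad0_grad_TA_le:
  assumes y: "y \<in> T"
  shows "quad0 (grad n d (TA n d m l A \<phi>) y)
    \<le> (\<Sum>x\<in>T. quad0 (grad n d (proj n d m l A x \<phi>) y)) / real (l ^ d)"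
proof -
  define g where "g x = grad n d (proj n d m l A x \<phi>) y" for x
  define S where "S = {x \<in> T. y \<in> closed_cube x}"
  have S: "S \<subseteq> T" "finite S" using finite_torus finite_subset by (auto simp: S_def)
  have lpos: "real (l ^ d) > 0" using l_ge_2 by simp
  have "quad0 (\<lambda>k j. \<Sum>x\<in>T. g x k j) = quad0 (\<lambda>k j. \<Sum>x\<in>S. g x k j)"
    using grad_proj_outside_closed_cube y S
    by (intro quad0_cong sum.mono_neutral_right finite_torus) (auto simp: S_def g_def)
  also have "\<dots> \<le> real (card S) * (\<Sum>x\<in>S. quad0 (g x))"
    by (rule quad0_sum_le[OF S(2)])
  also have "\<dots> \<le> real (l ^ d) * (\<Sum>x\<in>T. quad0 (g x))"
    using card_closed_cubes_containing[of y] S quad0_nonneg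
    by (intro mult_mono sum_mono2 sum_nonneg finite_torus) (auto simp: S_def)
  finally have "quad0 (\<lambda>k j. \<Sum>x\<in>T. g x k j) \<le> real (l ^ d) * (\<Sum>x\<in>T. quad0 (g x))" .
  moreover have "quad0 (grad n d (TA n d m l A \<phi>) y) = quad0 (\<lambda>k j. \<Sum>x\<in>T. g x k j) / real (l ^ d) ^ 2"
    unfolding grad_TA quad0_scale g_def
    by (simp add: norm_inverse norm_power power2_eq_square divide_inverse)
  ultimately have "real (l ^ d) * (real (l ^ d) * quad0 (grad n d (TA n d m l A \<phi>) y))
      \<le> real (l ^ d) * (\<Sum>x\<in>T. quad0 (g x))"
    using lpos by (simp add: field_simps power2_eq_square)
  then have "real (l ^ d) * quad0 (grad n d (TA n d m l A \<phi>) y) \<le> (\<Sum>x\<in>T. quad0 (g x))"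
    using lpos by (simp only: mult_le_cancel_left_pos)
  then show ?thesis using lpos by (simp add: g_def pos_le_divide_eq mult.commute)
qed

lemma energy_TA_le: "energy (TA n d m l A \<phi>) \<le> 9 * energy \<phi>"
proof -
  have lpos: "real (l ^ d) > 0" using l_ge_2 by simp
  have "energy (TA n d m l A \<phi>)
      \<le> (\<Sum>y\<in>T. (\<Sum>x\<in>T. quad0 (grad n d (proj n d m l A x \<phi>) y)) / real (l ^ d))"
    unfolding energy_def by (intro sum_mono quad0_grad_TA_le)
  also have "\<dots> = (\<Sum>x\<in>T. energy (proj n d m l A x \<phi>)) / real (l ^ d)"
    unfolding energy_def sum_divide_distrib[symmetric] by (subst sum.swap) (rule refl)
  also have "\<dots> \<le> (\<Sum>x\<in>T. 9 * (\<Sum>y\<in>closed_cube x. quad0 (grad n d \<phi> y))) / real (l ^ d)"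
    using lpos energy_proj_le by (intro divide_right_mono sum_mono) auto
  also have "\<dots> = 9 * (\<Sum>x\<in>T. \<Sum>y\<in>closed_cube x. quad0 (grad n d \<phi> y)) / real (l ^ d)"
    by (simp add: sum_distrib_left)
  also have "\<dots> \<le> 9 * (real (l ^ d) * energy \<phi>) / real (l ^ d)"
    unfolding energy_def using sum_sum_closed_cube_le quad0_nonneg lpos
    by (intro divide_right_mono mult_left_mono) auto
  also have "\<dots> = 9 * energy \<phi>" using l_ge_2 by simp
  finally show ?thesis .
qed

end

theorem lemma5p4:
  fixes d m L N l :: nat and c0 :: real and A A0 A1 :: coeff and \<phi> :: cfield
  assumes "d \<ge> 2" and "m \<ge> 1" and "L \<ge> 3" and "odd L" and "N \<ge> 1"
    and "l \<ge> 3" and "l - 1 < L ^ N"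
    and "c0 > 0"
    and "A = (\<lambda>i j k r. A0 i j k r + A1 i j k r)"
    and "\<forall>F G. minner m d (applyA m d A0 F) G = minner m d F (applyA m d A0 G)"
    and "\<forall>F. Re (minner m d (applyA m d A0 F) F) \<ge> c0 * (mnorm m d F)^2"
    and "\<forall>F. mnorm m d (applyA m d A1 F) \<le> (c0 / 2) * mnorm m d F"
    and "\<phi> \<in> XN (L ^ N) d m"
  shows "normA0 (L ^ N) d m A0 (TA (L ^ N) d m l A \<phi>) \<le> 9 * normA0 (L ^ N) d m A0 \<phi>"
proof -
  interpret cube_projection m d c0 A A0 A1 "L ^ N" l
    by unfold_locales (use assms in auto)
  have "normA0 (L ^ N) d m A0 (TA (L ^ N) d m l A \<phi>) \<le> sqrt (9 * energy \<phi>)"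
    unfolding normA0_eq_sqrt_energy using energy_TA_le by simp
  also have "\<dots> = 3 * normA0 (L ^ N) d m A0 \<phi>"
    by (simp add: normA0_eq_sqrt_energy real_sqrt_mult)
  also have "\<dots> \<le> 9 * normA0 (L ^ N) d m A0 \<phi>"
    by (simp add: normA0_eq_sqrt_energy energy_nonneg)
  finally show ?thesis .
qed

end
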